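(* Let $(S,E)$ and $(S',E')$ be finite simple graphs and let $N(S,E)$, $N(S',E')$ be the simply connected real Lie groups whose Lie algebras are $\mathfrak{n}(S,E)$ and $\mathfrak{n}(S',E')$ (over $k=\mathbb{R}$). Then $N(S,E)$ and $N(S',E')$ are isomorphic as Lie groups if and only if the graphs $(S,E)$ and $(S',E')$ are isomorphic.
   Context: A finite simple graph $(S,E)$ has finite vertex set $S$ and edge set $E$ consisting of unordered pairs $\alpha\beta$ of distinct vertices. Let $V$ be the real vector space with basis $S$, and let $W\subseteq \bigwedge^2 V$ be the subspace spanned by all $\alpha\wedge\beta$ with $\alpha,\beta\in S$, $\alpha\neq\beta$ and $\alpha\beta\notin E$. The real Lie algebra $\mathfrak{n}(S,E)$ is $V\oplus (\bigwedge^2V)/W$ with bracket determined by $[v_1,v_2]=v_1\wedge v_2 \bmod W$ for $v_1,v_2\in V$ and $[x,y]=0$ for $x\in\mathfrak{n}(S,E)$, $y\in(\bigwedge^2V)/W$. Concretely, $N(S,E)$ can be realized as the set $\mathfrak{n}(S,E)$ with multiplication $(v_1,x_1)\cdot(v_2,x_2)=(v_1+v_2,\,x_1+x_2+\tfrac12[v_1,v_2])$ for $v_i\in V$, $x_i\in(\bigwedge^2V)/W$. *)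

theory Defs
  imports "HOL-Analysis.Analysis"
begin

definition simple_graph :: "'a set \<Rightarrow> 'a set set \<Rightarrow> bool" where
  "simple_graph S E \<longleftrightarrow> finite S \<and>
     (\<forall>e\<in>E. \<exists>a b. e = {a, b} \<and> a \<noteq> b \<and> a \<in> S \<and> b \<in> S)"

definition graph_iso :: "'a set \<Rightarrow> 'a set set \<Rightarrow> 'b set \<Rightarrow> 'b set set \<Rightarrow> bool" where
  "graph_iso S E S' E' \<longleftrightarrow> (\<exists>f. bij_betw f S S' \<and>
     (\<forall>a\<in>S. \<forall>b\<in>S. {a, b} \<in> E \<longleftrightarrow> {f a, f b} \<in> E'))"

fun Ck :: "nat \<Rightarrow> ('x::real_normed_vector \<Rightarrow> 'y::real_normed_vector) \<Rightarrow> bool" where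
  "Ck 0 f = continuous_on UNIV f"
| "Ck (Suc k) f = (\<exists>f'. (\<forall>x. (f has_derivative f' x) (at x)) \<and> (\<forall>v. Ck k (\<lambda>x. f' x v)))"

definition smooth :: "('x::real_normed_vector \<Rightarrow> 'y::real_normed_vector) \<Rightarrow> bool" where
  "smooth f \<longleftrightarrow> (\<forall>k. Ck k f)"

text \<open>V = functions on S (vectors in real^'a vanishing off S). The quotient
  (wedge^2 V)/W is identified with its coordinates w.r.t. the basis a\<and>b (ab an edge):
  antisymmetric matrices supported on edges. The element v1\<and>v2 mod W has coordinate
  v1(a) v2(b) - v1(b) v2(a) at the edge ab.\<close>

type_synonym 'a Nelem = "(real^'a) \<times> (real^'a^'a)"

definition N_carrier :: "'a::finite set \<Rightarrow> 'a set set \<Rightarrow> 'a Nelem set" where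
  "N_carrier S E = {(v, c). (\<forall>x. x \<notin> S \<longrightarrow> v $ x = 0) \<and>
      (\<forall>i j. c $ i $ j = - (c $ j $ i)) \<and> (\<forall>i j. {i, j} \<notin> E \<longrightarrow> c $ i $ j = 0)}"

definition N_bracket :: "'a::finite set set \<Rightarrow> real^'a \<Rightarrow> real^'a \<Rightarrow> real^'a^'a" where
  "N_bracket E v1 v2 = (\<chi> i j. if {i, j} \<in> E then v1 $ i * v2 $ j - v1 $ j * v2 $ i else 0)"

definition N_mult :: "'a::finite set set \<Rightarrow> 'a Nelem \<Rightarrow> 'a Nelem \<Rightarrow> 'a Nelem" where
  "N_mult E x y = (fst x + fst y, snd x + snd y + (1/2) *\<^sub>R N_bracket E (fst x) (fst y))"

text \<open>Lie group isomorphism: a bijective group homomorphism which is a diffeomorphism,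
  i.e. it and its inverse are smooth (restrictions of smooth maps of the ambient
  vector spaces; the carriers are linear subspaces, so this is the usual smoothness).\<close>

definition N_lie_iso :: "'a::finite set \<Rightarrow> 'a set set \<Rightarrow> 'b::finite set \<Rightarrow> 'b set set
     \<Rightarrow> ('a Nelem \<Rightarrow> 'b Nelem) \<Rightarrow> bool" where
  "N_lie_iso S E S' E' \<phi> \<longleftrightarrow>
     bij_betw \<phi> (N_carrier S E) (N_carrier S' E') \<and>
     (\<forall>x\<in>N_carrier S E. \<forall>y\<in>N_carrier S E. \<phi> (N_mult E x y) = N_mult E' (\<phi> x) (\<phi> y)) \<and>
     (\<exists>F. smooth F \<and> (\<forall>x\<in>N_carrier S E. F x = \<phi> x)) \<and>
     (\<exists>G. smooth G \<and> (\<forall>y\<in>N_carrier S' E'. G y \<in> N_carrier S E \<and> \<phi> (G y) = y))"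

definition N_lie_isomorphic :: "'a::finite set \<Rightarrow> 'a set set \<Rightarrow> 'b::finite set \<Rightarrow> 'b set set \<Rightarrow> bool" where
  "N_lie_isomorphic S E S' E' \<longleftrightarrow> (\<exists>\<phi>. N_lie_iso S E S' E' \<phi>)"

end

theory Submission
  imports Defs
begin

text \<open>
  A graph isomorphism relabels coordinates and thus induces a linear isomorphism of the groups.
  Conversely, an isomorphism \<open>\<phi>\<close> with a continuous extension induces on \<open>V \<cong> N/[N,N]\<close> a linear
  bijection \<open>T\<close> such that \<open>[T x, T y]\<close> only depends on \<open>[x, y]\<close>. Bracketing with the basis
  vector \<open>\<alpha>\<close> has rank \<open>deg \<alpha>\<close>, so a nonzero entry of the column \<open>T \<alpha>\<close> at \<open>\<rho>\<close> forces
  \<open>deg \<rho> \<le> deg \<alpha>\<close>, with strict inequality unless every neighbour of every other vertex of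
  the support of \<open>T \<alpha>\<close> is also a neighbour of \<open>\<rho>\<close> or \<open>\<rho>\<close> itself. Invertibility of \<open>T\<close> gives a transversal \<open>\<sigma>\<close> with \<open>(T \<alpha>)(\<sigma> \<alpha>) \<noteq> 0\<close>;
  comparing degree sums in both directions shows that \<open>\<sigma>\<close> preserves degrees. Finally, if \<open>\<sigma>\<close>
  mapped a non-edge \<open>\<alpha>\<beta>\<close> to an edge, \<open>[T \<alpha>, T \<beta>] = 0\<close> would make the two columns
  parallel on the twin class of \<open>\<sigma> \<alpha>\<close>, which is a clique; but the columns supported on that
  class have to span it, and there are only as many of them as the class has elements.
\<close>

definition vertex_space :: "'a::finite set \<Rightarrow> (real^'a) set" where
  "vertex_space S = {v. \<forall>x. x \<notin> S \<longrightarrow> v $ x = 0}"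

abbreviation unit_vec :: "'a::finite \<Rightarrow> real^'a" where
  "unit_vec i \<equiv> axis i 1"

definition restrict_vec :: "'a set \<Rightarrow> real^'a::finite \<Rightarrow> real^'a" where
  "restrict_vec A v = (\<chi> i. if i \<in> A then v $ i else 0)"

lemma unit_vec_nth: "unit_vec i $ k = (if k = i then 1 else 0)"
  by (simp add: axis_def)

lemma unit_vec_in_vertex_space: "i \<in> S \<Longrightarrow> unit_vec i \<in> vertex_space S"
  by (auto simp: vertex_space_def unit_vec_nth)

lemma vertex_space_add: "a \<in> vertex_space S \<Longrightarrow> b \<in> vertex_space S \<Longrightarrow> a + b \<in> vertex_space S"
  and vertex_space_scaleR: "a \<in> vertex_space S \<Longrightarrow> r *\<^sub>R a \<in> vertex_space S"
  and vertex_space_zero: "0 \<in> vertex_space S"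
  by (auto simp: vertex_space_def)

lemma restrict_vec_nth: "restrict_vec A v $ i = (if i \<in> A then v $ i else 0)"
  by (simp add: restrict_vec_def)

lemma restrict_vec_in_vertex_space: "restrict_vec S v \<in> vertex_space S"
  by (simp add: restrict_vec_def vertex_space_def)

lemma restrict_vec_id: "v \<in> vertex_space S \<Longrightarrow> restrict_vec S v = v"
  by (auto simp: restrict_vec_def vertex_space_def vec_eq_iff)

lemma linear_restrict_vec: "linear (restrict_vec A)"
  by (rule linearI) (auto simp: restrict_vec_def vec_eq_iff)

lemma vec_eq_sum_unit_vec:
  fixes v :: "real^'a::finite"
  assumes "\<And>x. x \<notin> A \<Longrightarrow> v $ x = 0"
  shows "v = (\<Sum>i\<in>A. v $ i *\<^sub>R unit_vec i)"
proof -
  have "(\<Sum>i\<in>A. v $ i *\<^sub>R unit_vec i) $ k = v $ k" for k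
    using assms by (auto simp: sum_component unit_vec_nth if_distrib cong: if_cong)
  then show ?thesis by (simp add: vec_eq_iff)
qed

lemma N_bracket_nth:
  "N_bracket E v1 v2 $ i $ j = (if {i, j} \<in> E then v1 $ i * v2 $ j - v1 $ j * v2 $ i else 0)"
  by (simp add: N_bracket_def)

lemma N_bracket_zero_right [simp]: "N_bracket E v 0 = 0"
  and N_bracket_zero_left [simp]: "N_bracket E 0 w = 0"
  by (simp_all add: vec_eq_iff N_bracket_nth)

lemma N_bracket_antisym: "N_bracket E w v = - N_bracket E v w"
  by (simp add: vec_eq_iff N_bracket_nth insert_commute)

lemma N_bracket_scaleR_left: "N_bracket E (a *\<^sub>R v) w = a *\<^sub>R N_bracket E v w"
  by (auto simp: vec_eq_iff N_bracket_nth algebra_simps)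

lemma linear_N_bracket: "linear (N_bracket E x)"
  by (rule linearI) (auto simp: vec_eq_iff N_bracket_nth algebra_simps)

lemma simple_graph_edgeD:
  assumes "simple_graph S E" "{a, b} \<in> E"
  shows "a \<noteq> b" "a \<in> S" "b \<in> S"
proof -
  obtain x y where "{a, b} = {x, y}" "x \<noteq> y" "x \<in> S" "y \<in> S"
    using assms unfolding simple_graph_def by blast
  then show "a \<noteq> b" "a \<in> S" "b \<in> S" by (auto simp: doubleton_eq_iff)
qed

definition neighbours :: "'a set set \<Rightarrow> 'a set \<Rightarrow> 'a \<Rightarrow> 'a set" where
  "neighbours E S a = {b\<in>S. {a, b} \<in> E}"

abbreviation graph_degree :: "'a set set \<Rightarrow> 'a set \<Rightarrow> 'a \<Rightarrow> nat" where
  "graph_degree E S a \<equiv> card (neighbours E S a)"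

definition twins :: "'a set set \<Rightarrow> 'a \<Rightarrow> 'a \<Rightarrow> bool" where
  "twins E a b \<longleftrightarrow> (\<forall>e. e \<noteq> a \<longrightarrow> e \<noteq> b \<longrightarrow> ({a, e} \<in> E \<longleftrightarrow> {b, e} \<in> E))"

definition dominates :: "'a set set \<Rightarrow> 'a \<Rightarrow> 'a \<Rightarrow> bool" where
  "dominates E a b \<longleftrightarrow> (\<forall>e. {a, e} \<in> E \<longrightarrow> e \<noteq> b \<longrightarrow> {b, e} \<in> E)"

definition twin_class :: "'a set set \<Rightarrow> 'a set \<Rightarrow> 'a \<Rightarrow> 'a set" where
  "twin_class E S c = {k\<in>S. graph_degree E S k = graph_degree E S c \<and> twins E k c}"

lemma finite_neighbours: "simple_graph S E \<Longrightarrow> finite (neighbours E S a)"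
  by (auto simp: simple_graph_def neighbours_def)

lemma twins_refl: "twins E a a"
  by (simp add: twins_def)

lemma twins_sym: "twins E a b \<Longrightarrow> twins E b a"
  unfolding twins_def by blast

lemma twins_trans:
  assumes ab: "twins E a b" and bc: "twins E b c"
  shows "twins E a c"
  unfolding twins_def
proof (intro allI impI)
  fix e assume ea: "e \<noteq> a" and ec: "e \<noteq> c"
  show "{a, e} \<in> E \<longleftrightarrow> {c, e} \<in> E"
  proof (cases "a = b \<or> b = c \<or> a = c \<or> e \<noteq> b")
    case True
    then show ?thesis using ab bc ea ec unfolding twins_def by blast
  next
    case False
    then have "{b, a} \<in> E \<longleftrightarrow> {c, a} \<in> E" and "{a, c} \<in> E \<longleftrightarrow> {b, c} \<in> E"
      using ab bc unfolding twins_def by auto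
    then show ?thesis using False by (auto simp: insert_commute)
  qed
qed

lemma twins_if_dominates_same_degree:
  assumes graph: "simple_graph S E" and dom: "dominates E a b"
    and deg: "graph_degree E S a = graph_degree E S b" and "a \<in> S"
  shows "twins E a b"
  unfolding twins_def
proof (intro allI impI)
  fix e assume ea: "e \<noteq> a" and eb: "e \<noteq> b"
  show "{a, e} \<in> E \<longleftrightarrow> {b, e} \<in> E"
  proof
    assume "{a, e} \<in> E" then show "{b, e} \<in> E" using dom eb unfolding dominates_def by blast
  next
    assume be: "{b, e} \<in> E"
    show "{a, e} \<in> E"
    proof (rule ccontr)
      assume ae: "{a, e} \<notin> E"
      \<comment> \<open>replacing \<open>b\<close> by \<open>a\<close> maps the neighbours of \<open>a\<close> into those of \<open>b\<close>, missing \<open>e\<close>\<close>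
      define f where "f x = (if x = b then a else x)" for x
      have "inj_on f (neighbours E S a)"
        by (auto simp: inj_on_def f_def neighbours_def dest: simple_graph_edgeD[OF graph])
      moreover have "f ` neighbours E S a \<subseteq> neighbours E S b - {e}"
      proof
        fix y assume "y \<in> f ` neighbours E S a"
        then obtain x where x: "{a, x} \<in> E" "x \<in> S" and y: "y = f x"
          by (auto simp: neighbours_def)
        show "y \<in> neighbours E S b - {e}"
        proof (cases "x = b")
          case True
          then show ?thesis using x \<open>a \<in> S\<close> ea y by (auto simp: f_def neighbours_def insert_commute)
        next
          case False
          then have "{b, x} \<in> E" using dom x unfolding dominates_def by blast
          then show ?thesis using x y ae False by (auto simp: f_def neighbours_def)
        qed
      qed
      ultimately have "graph_degree E S a \<le> card (neighbours E S b - {e})"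
        by (intro card_inj_on_le) (auto simp: finite_neighbours[OF graph])
      also have "\<dots> < graph_degree E S b"
        using be simple_graph_edgeD(3)[OF graph be] finite_neighbours[OF graph, of b]
        by (intro card_Diff1_less) (auto simp: neighbours_def)
      finally show False using deg by simp
    qed
  qed
qed

lemma adjacent_twins_clique:
  assumes cd: "{c, d} \<in> E" "c \<noteq> d" and d: "twins E d c"
    and k: "twins E k c" and l: "twins E l c" and kl: "k \<noteq> l"
  shows "{k, l} \<in> E"
proof -
  have adj: "{x, c} \<in> E" if "twins E x c" "x \<noteq> c" for x
  proof (cases "x = d")
    case True then show ?thesis using cd by (simp add: insert_commute)
  next
    case False
    have "twins E x d" using that d by (blast intro: twins_trans twins_sym)
    then show ?thesis using False that cd unfolding twins_def by (auto simp: insert_commute)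
  qed
  consider "k = c" | "l = c" | "k \<noteq> c" "l \<noteq> c" by blast
  then show ?thesis
  proof cases
    case 1
    then show ?thesis using adj[OF l] kl by (simp add: insert_commute)
  next
    case 2
    then show ?thesis using adj[OF k] kl by simp
  next
    case 3
    then have "{k, l} \<in> E \<longleftrightarrow> {c, l} \<in> E" using k[unfolded twins_def, rule_format, of l] kl by auto
    then show ?thesis using adj[OF l] 3 by (simp add: insert_commute)
  qed
qed

text \<open>Linear independence of an indexed family; unlike \<open>independent\<close> on sets it sees
  repetitions.\<close>

definition independent_family :: "'i set \<Rightarrow> ('i \<Rightarrow> 'v::real_vector) \<Rightarrow> bool" where
  "independent_family A u \<longleftrightarrow> (\<forall>c. (\<Sum>\<alpha>\<in>A. c \<alpha> *\<^sub>R u \<alpha>) = 0 \<longrightarrow> (\<forall>\<alpha>\<in>A. c \<alpha> = 0))"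

lemma independent_family_insertD:
  assumes "finite A" "a \<notin> A" "independent_family (insert a A) u"
  shows "independent_family A u"
  unfolding independent_family_def
proof (intro allI impI)
  fix c assume c: "(\<Sum>\<alpha>\<in>A. c \<alpha> *\<^sub>R u \<alpha>) = 0"
  define c' where "c' = c(a := 0)"
  have "(\<Sum>\<alpha>\<in>insert a A. c' \<alpha> *\<^sub>R u \<alpha>) = (\<Sum>\<alpha>\<in>A. c \<alpha> *\<^sub>R u \<alpha>)"
    using assms(1,2) by (auto simp: c'_def intro!: sum.cong)
  with c have "(\<Sum>\<alpha>\<in>insert a A. c' \<alpha> *\<^sub>R u \<alpha>) = 0" by simp
  then have "\<forall>\<alpha>\<in>insert a A. c' \<alpha> = 0"
    using assms(3) unfolding independent_family_def by blast
  then show "\<forall>\<alpha>\<in>A. c \<alpha> = 0"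
    using assms(2) by (auto simp: c'_def split: if_splits)
qed

lemma unit_vec_combination_if_deletion_dependent:
  fixes u :: "'i \<Rightarrow> real^'b::finite"
  assumes ind: "independent_family A u"
    and dep: "\<not> independent_family A (\<lambda>\<alpha>. u \<alpha> - u \<alpha> $ \<rho> *\<^sub>R unit_vec \<rho>)"
  shows "\<exists>d. unit_vec \<rho> = (\<Sum>\<alpha>\<in>A. d \<alpha> *\<^sub>R u \<alpha>)"
proof -
  obtain c where c0: "(\<Sum>\<alpha>\<in>A. c \<alpha> *\<^sub>R (u \<alpha> - u \<alpha> $ \<rho> *\<^sub>R unit_vec \<rho>)) = 0"
    and cn: "\<exists>\<alpha>\<in>A. c \<alpha> \<noteq> 0"
    using dep unfolding independent_family_def by blast
  define l where "l = (\<Sum>\<alpha>\<in>A. c \<alpha> * u \<alpha> $ \<rho>)"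
  have "(\<Sum>\<alpha>\<in>A. c \<alpha> *\<^sub>R (u \<alpha> - u \<alpha> $ \<rho> *\<^sub>R unit_vec \<rho>))
      = (\<Sum>\<alpha>\<in>A. c \<alpha> *\<^sub>R u \<alpha>) - l *\<^sub>R unit_vec \<rho>"
    by (simp add: l_def scaleR_diff_right sum_subtractf scaleR_sum_left)
  with c0 have eq: "(\<Sum>\<alpha>\<in>A. c \<alpha> *\<^sub>R u \<alpha>) = l *\<^sub>R unit_vec \<rho>" by simp
  have "l \<noteq> 0" using ind eq cn by (auto simp: independent_family_def)
  have "(\<Sum>\<alpha>\<in>A. (c \<alpha> / l) *\<^sub>R u \<alpha>) = (1 / l) *\<^sub>R (\<Sum>\<alpha>\<in>A. c \<alpha> *\<^sub>R u \<alpha>)"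
    by (simp add: scaleR_sum_right)
  then show ?thesis using eq \<open>l \<noteq> 0\<close> by (intro exI[of _ "\<lambda>\<alpha>. c \<alpha> / l"]) simp
qed

text \<open>The exchange step behind the Laplace expansion: some coordinate \<open>\<rho>\<close> of \<open>u a\<close> can be
  used as a pivot after which the remaining vectors, with coordinate \<open>\<rho>\<close> deleted, stay
  independent.\<close>

lemma independent_family_pivot:
  fixes u :: "'i \<Rightarrow> real^'b::finite"
  assumes fin: "finite A" and aA: "a \<notin> A" and ind: "independent_family (insert a A) u"
    and supp: "\<And>\<rho>. \<rho> \<notin> B \<Longrightarrow> u a $ \<rho> = 0"
  obtains \<rho> where "\<rho> \<in> B" "u a $ \<rho> \<noteq> 0"
    "independent_family A (\<lambda>\<alpha>. u \<alpha> - u \<alpha> $ \<rho> *\<^sub>R unit_vec \<rho>)"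
proof -
  have "\<exists>\<rho>\<in>B. u a $ \<rho> \<noteq> 0 \<and> independent_family A (\<lambda>\<alpha>. u \<alpha> - u \<alpha> $ \<rho> *\<^sub>R unit_vec \<rho>)"
  proof (rule ccontr)
    assume H: "\<not> ?thesis"
    \<comment> \<open>then \<open>u a\<close> would be a combination of the \<open>u \<alpha>\<close>, \<open>\<alpha> \<in> A\<close>\<close>
    have "\<exists>d. unit_vec \<rho> = (\<Sum>\<alpha>\<in>A. d \<alpha> *\<^sub>R u \<alpha>)" if "\<rho> \<in> B" "u a $ \<rho> \<noteq> 0" for \<rho>
      using unit_vec_combination_if_deletion_dependent[OF independent_family_insertD[OF fin aA ind]]
        H that by blast
    then obtain D where D: "\<And>\<rho>. \<rho> \<in> B \<Longrightarrow> u a $ \<rho> \<noteq> 0 \<Longrightarrow> unit_vec \<rho> = (\<Sum>\<alpha>\<in>A. D \<rho> \<alpha> *\<^sub>R u \<alpha>)"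
      by metis
    have "u a = (\<Sum>\<rho>\<in>B. u a $ \<rho> *\<^sub>R unit_vec \<rho>)"
      by (rule vec_eq_sum_unit_vec) (use supp in auto)
    also have "\<dots> = (\<Sum>\<rho>\<in>B. u a $ \<rho> *\<^sub>R (\<Sum>\<alpha>\<in>A. D \<rho> \<alpha> *\<^sub>R u \<alpha>))"
      by (rule sum.cong) (use D in auto)
    also have "\<dots> = (\<Sum>\<alpha>\<in>A. (\<Sum>\<rho>\<in>B. u a $ \<rho> * D \<rho> \<alpha>) *\<^sub>R u \<alpha>)"
      by (simp add: scaleR_sum_right scaleR_sum_left sum.swap[of _ B])
    finally have ua: "u a = (\<Sum>\<alpha>\<in>A. (\<Sum>\<rho>\<in>B. u a $ \<rho> * D \<rho> \<alpha>) *\<^sub>R u \<alpha>)" .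
    define c where "c = (\<lambda>\<alpha>. if \<alpha> = a then -1 else (\<Sum>\<rho>\<in>B. u a $ \<rho> * D \<rho> \<alpha>))"
    have "(\<Sum>\<alpha>\<in>insert a A. c \<alpha> *\<^sub>R u \<alpha>) = - u a + (\<Sum>\<alpha>\<in>A. (\<Sum>\<rho>\<in>B. u a $ \<rho> * D \<rho> \<alpha>) *\<^sub>R u \<alpha>)"
      using fin aA by (auto simp: c_def intro!: sum.cong)
    also have "\<dots> = 0" using ua by simp
    finally show False using ind by (auto simp: independent_family_def c_def)
  qed
  then show ?thesis using that by blast
qed

lemma independent_family_nonzero_transversal:
  fixes u :: "'i \<Rightarrow> real^'b::finite"
  assumes "finite A" and "\<And>\<alpha> \<rho>. \<alpha> \<in> A \<Longrightarrow> \<rho> \<notin> B \<Longrightarrow> u \<alpha> $ \<rho> = 0"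
    and "independent_family A u"
  shows "\<exists>\<sigma>. inj_on \<sigma> A \<and> \<sigma> ` A \<subseteq> B \<and> (\<forall>\<alpha>\<in>A. u \<alpha> $ \<sigma> \<alpha> \<noteq> 0)"
  using assms
proof (induction A arbitrary: B u rule: finite_induct)
  case empty
  then show ?case by auto
next
  case (insert a A)
  obtain \<rho> where \<rho>B: "\<rho> \<in> B" and ua\<rho>: "u a $ \<rho> \<noteq> 0"
    and ind: "independent_family A (\<lambda>\<alpha>. u \<alpha> - u \<alpha> $ \<rho> *\<^sub>R unit_vec \<rho>)"
    using independent_family_pivot[OF insert.hyps insert.prems(2)] insert.prems(1) by blast
  have "(u \<alpha> - u \<alpha> $ \<rho> *\<^sub>R unit_vec \<rho>) $ \<rho>' = 0" if "\<alpha> \<in> A" "\<rho>' \<notin> B - {\<rho>}" for \<alpha> \<rho>'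
    using insert.prems(1)[of \<alpha> \<rho>'] that by (auto simp: unit_vec_nth)
  from insert.IH[OF this ind]
  obtain \<sigma> where inj: "inj_on \<sigma> A" and im: "\<sigma> ` A \<subseteq> B - {\<rho>}"
    and nz: "\<forall>\<alpha>\<in>A. (u \<alpha> - u \<alpha> $ \<rho> *\<^sub>R unit_vec \<rho>) $ \<sigma> \<alpha> \<noteq> 0"
    by blast
  have "u \<alpha> $ \<sigma> \<alpha> \<noteq> 0" if "\<alpha> \<in> A" for \<alpha>
  proof -
    have "\<sigma> \<alpha> \<noteq> \<rho>" using im that by auto
    then show ?thesis using bspec[OF nz that] by (simp add: unit_vec_nth)
  qed
  moreover have "inj_on (\<sigma>(a := \<rho>)) (insert a A)"
    using inj im insert.hyps(2) by (auto simp: inj_on_def)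
  moreover have "(\<sigma>(a := \<rho>)) ` insert a A \<subseteq> B"
    using im \<rho>B insert.hyps(2) by auto
  moreover have "\<forall>\<alpha>\<in>insert a A. u \<alpha> $ (\<sigma>(a := \<rho>)) \<alpha> \<noteq> 0"
    using calculation(1) ua\<rho> insert.hyps(2) by auto
  ultimately show ?case by blast
qed

lemma card_lt_if_redundant_spanning:
  fixes f :: "'i \<Rightarrow> 'v::real_vector"
  assumes "finite M" "independent U" "U \<subseteq> span (f ` M)"
    and "x \<in> M" "y \<in> M" "x \<noteq> y" "f x \<in> span {f y}"
  shows "card U < card M"
proof -
  have "f x \<in> span (f ` (M - {x}))"
    using assms(5-7) span_mono[of "{f y}" "f ` (M - {x})"] by auto
  then have "span (f ` M) = span (f ` (M - {x}))"
    using span_redundant assms(4) by (metis insert_Diff image_insert)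
  then have "card U \<le> card (f ` (M - {x}))"
    using independent_span_bound[of "f ` (M - {x})" U] assms(1-3) by auto
  also have "\<dots> \<le> card (M - {x})" by (rule card_image_le) (simp add: assms(1))
  also have "\<dots> < card M" using assms(1,4) by (rule card_Diff1_less)
  finally show ?thesis .
qed

lemma restrict_vec_parallel_if_minors_vanish:
  fixes u v :: "real^'b::finite"
  assumes "\<And>k l. k \<in> K \<Longrightarrow> l \<in> K \<Longrightarrow> u $ k * v $ l = u $ l * v $ k"
  shows "restrict_vec K u = 0 \<or> restrict_vec K v \<in> span {restrict_vec K u}"
proof (cases "restrict_vec K u = 0")
  case False
  then obtain k0 where k0: "k0 \<in> K" "u $ k0 \<noteq> 0" by (auto simp: restrict_vec_def vec_eq_iff split: if_splits)
  have "v $ k = (v $ k0 / u $ k0) * u $ k" if "k \<in> K" for k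
    using assms[OF k0(1) that] k0(2) by (simp add: field_simps)
  then have "restrict_vec K v = (v $ k0 / u $ k0) *\<^sub>R restrict_vec K u"
    by (auto simp: restrict_vec_def vec_eq_iff)
  then show ?thesis by (simp add: span_base span_scale)
qed simp

section \<open>Linear maps compatible with the brackets\<close>

lemma N_bracket_unit_vec_restrict:
  assumes graph: "simple_graph S E"
  shows "N_bracket E (unit_vec \<alpha>) y = N_bracket E (unit_vec \<alpha>) (restrict_vec (neighbours E S \<alpha>) y)"
proof -
  have "N_bracket E (unit_vec \<alpha>) y $ i $ j
      = N_bracket E (unit_vec \<alpha>) (restrict_vec (neighbours E S \<alpha>) y) $ i $ j" for i j
  proof (cases "{i, j} \<in> E")
    case True
    then have "i \<noteq> j" "i \<in> S" "j \<in> S" "{j, i} \<in> E"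
      using simple_graph_edgeD[OF graph] by (auto simp: insert_commute)
    then show ?thesis
      using True by (auto simp: N_bracket_nth unit_vec_nth restrict_vec_nth neighbours_def)
  qed (simp add: N_bracket_nth)
  then show ?thesis by (simp add: vec_eq_iff)
qed

text \<open>\<open>T\<close> and \<open>T'\<close> are the maps induced on \<open>V\<close> by a group isomorphism and its inverse;
  this locale holds the half of the data used to bound degrees through \<open>T\<close>.\<close>

locale bracket_compatible =
  fixes S :: "'a::finite set" and E :: "'a set set" and S' :: "'b::finite set" and E' :: "'b set set"
    and T :: "real^'a \<Rightarrow> real^'b" and T' :: "real^'b \<Rightarrow> real^'a"
  assumes graph: "simple_graph S E" and graph': "simple_graph S' E'"
    and lin: "linear T"
    and maps: "\<And>x. x \<in> vertex_space S \<Longrightarrow> T x \<in> vertex_space S'"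
    and right_inverse: "\<And>z. z \<in> vertex_space S' \<Longrightarrow> T' z \<in> vertex_space S \<and> T (T' z) = z"
    and bracket: "\<And>x y x' y'. x \<in> vertex_space S \<Longrightarrow> y \<in> vertex_space S \<Longrightarrow>
      x' \<in> vertex_space S \<Longrightarrow> y' \<in> vertex_space S \<Longrightarrow> N_bracket E x y = N_bracket E x' y' \<Longrightarrow>
      N_bracket E' (T x) (T y) = N_bracket E' (T x') (T y')"
begin

text \<open>If every coordinate in \<open>P\<close> can be singled out by bracketing \<open>T \<alpha>\<close> with some \<open>z\<close>,
  then \<open>card P\<close> bounds the rank of \<open>y \<mapsto> [T \<alpha>, T y]\<close>, which is at most \<open>deg \<alpha>\<close> because
  \<open>[\<alpha>, y]\<close> only depends on the neighbour coordinates of \<open>y\<close>.\<close>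

lemma card_le_degree_if_bracket_hits:
  assumes a: "\<alpha> \<in> S"
    and hits: "\<And>p. p \<in> P \<Longrightarrow> \<exists>z\<in>vertex_space S'. \<forall>q\<in>P.
      N_bracket E' (T (unit_vec \<alpha>)) z $ fst q $ snd q = (if q = p then 1 else 0)"
  shows "card P \<le> graph_degree E S \<alpha>"
proof -
  define N where "N = neighbours E S \<alpha>"
  define Pr :: "real^'b^'b \<Rightarrow> real^'b^'b" where "Pr m = (\<chi> i j. if (i, j) \<in> P then m $ i $ j else 0)" for m
  define f where "f y = Pr (N_bracket E' (T (unit_vec \<alpha>)) (T y))" for y
  define unit :: "'b \<times> 'b \<Rightarrow> real^'b^'b" where "unit p = axis (fst p) (axis (snd p) 1)" for p
  have linPr: "linear Pr" by (rule linearI) (auto simp: vec_eq_iff Pr_def)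
  have linf: "linear f"
    using linear_compose[OF linear_compose[OF lin linear_N_bracket[of E' "T (unit_vec \<alpha>)"]] linPr]
    by (simp add: f_def[abs_def] o_def)
  have inj_unit: "inj_on unit P"
  proof (rule inj_onI)
    fix p q assume "unit p = unit q"
    then have "unit p $ fst p $ snd p = unit q $ fst p $ snd p" by simp
    then show "p = q" by (auto simp: unit_def axis_def prod_eq_iff split: if_splits)
  qed
  have "independent (unit ` P)"
    by (rule independent_substdbasis) (auto simp: unit_def Basis_vec_def)
  moreover have "unit ` P \<subseteq> span (f ` unit_vec ` N)"
  proof
    fix u assume "u \<in> unit ` P"
    then obtain p where p: "p \<in> P" and u: "u = unit p" by blast
    obtain z where z: "z \<in> vertex_space S'"
      and zq: "\<forall>q\<in>P. N_bracket E' (T (unit_vec \<alpha>)) z $ fst q $ snd q = (if q = p then 1 else 0)"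
      using hits[OF p] by blast
    define y where "y = T' z"
    have y: "y \<in> vertex_space S" "T y = z" using right_inverse[OF z] by (auto simp: y_def)
    define y' where "y' = restrict_vec N y"
    have y': "y' \<in> vertex_space S"
      by (auto simp: y'_def restrict_vec_nth vertex_space_def N_def neighbours_def)
    have "f y' = f y"
      using bracket[OF unit_vec_in_vertex_space[OF a] y' unit_vec_in_vertex_space[OF a] y(1)]
        N_bracket_unit_vec_restrict[OF graph, of \<alpha> y]
      by (simp add: f_def y'_def N_def)
    also have "f y = u"
      using zq p by (cases p) (auto simp: f_def y(2) u Pr_def unit_def axis_def vec_eq_iff)
    finally have "f y' = u" .
    have "y' = (\<Sum>i\<in>N. y' $ i *\<^sub>R unit_vec i)"
      by (rule vec_eq_sum_unit_vec) (simp add: y'_def restrict_vec_nth)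
    then have "y' \<in> span (unit_vec ` N)"
      by (metis (no_types, lifting) image_eqI span_base span_scale span_sum)
    then show "u \<in> span (f ` unit_vec ` N)"
      using \<open>f y' = u\<close> span_linear_image[OF linf] by auto
  qed
  ultimately have "card (unit ` P) \<le> card (f ` unit_vec ` N)"
    using independent_span_bound[of "f ` unit_vec ` N" "unit ` P"] by simp
  also have "\<dots> \<le> card N"
    using card_image_le[of "unit_vec ` N" f] card_image_le[of N unit_vec] by simp
  finally show ?thesis using card_image[OF inj_unit] by (simp add: N_def)
qed

lemma degree_le_of_nonzero_entry:
  assumes a: "\<alpha> \<in> S" and r: "T (unit_vec \<alpha>) $ \<rho> \<noteq> 0"
  shows "graph_degree E' S' \<rho> \<le> graph_degree E S \<alpha>"
proof -
  define x where "x = T (unit_vec \<alpha>)"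
  have "card (Pair \<rho> ` neighbours E' S' \<rho>) \<le> graph_degree E S \<alpha>"
  proof (rule card_le_degree_if_bracket_hits[OF a])
    fix p assume "p \<in> Pair \<rho> ` neighbours E' S' \<rho>"
    then obtain e where p: "p = (\<rho>, e)" and e: "e \<in> S'" "{\<rho>, e} \<in> E'"
      by (auto simp: neighbours_def)
    have "\<rho> \<noteq> e" using simple_graph_edgeD[OF graph' e(2)] by simp
    have "\<forall>q\<in>Pair \<rho> ` neighbours E' S' \<rho>.
        N_bracket E' x ((1 / x $ \<rho>) *\<^sub>R unit_vec e) $ fst q $ snd q = (if q = p then 1 else 0)"
      using \<open>\<rho> \<noteq> e\<close> r simple_graph_edgeD(1)[OF graph']
      by (auto simp: p N_bracket_nth unit_vec_nth x_def neighbours_def)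
    moreover have "(1 / x $ \<rho>) *\<^sub>R unit_vec e \<in> vertex_space S'"
      using e by (simp add: vertex_space_scaleR unit_vec_in_vertex_space)
    ultimately show "\<exists>z\<in>vertex_space S'. \<forall>q\<in>Pair \<rho> ` neighbours E' S' \<rho>.
        N_bracket E' (T (unit_vec \<alpha>)) z $ fst q $ snd q = (if q = p then 1 else 0)"
      unfolding x_def by blast
  qed
  then show ?thesis by (simp add: card_image inj_on_def)
qed

text \<open>When \<open>\<gamma>\<close> and \<open>\<rho>\<close> both lie in the support of \<open>T \<alpha>\<close> and \<open>\<gamma>\<close> misses a neighbour \<open>\<epsilon>\<close>
  of \<open>\<rho>\<close>, the coordinate \<open>\<rho>\<epsilon>\<close> can be singled out in addition to the edges at \<open>\<gamma>\<close>.\<close>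

lemma degree_lt_of_nonzero_entries:
  assumes a: "\<alpha> \<in> S" and g: "T (unit_vec \<alpha>) $ \<gamma> \<noteq> 0" and r: "T (unit_vec \<alpha>) $ \<rho> \<noteq> 0"
    and re: "{\<rho>, \<epsilon>} \<in> E'" and eg: "\<epsilon> \<noteq> \<gamma>" and ge: "{\<gamma>, \<epsilon>} \<notin> E'"
  shows "graph_degree E' S' \<gamma> < graph_degree E S \<alpha>"
proof -
  define x where "x = T (unit_vec \<alpha>)"
  have xr: "x $ \<rho> \<noteq> 0" and xg: "x $ \<gamma> \<noteq> 0" using r g by (simp_all add: x_def)
  have rne: "\<rho> \<noteq> \<epsilon>" and eS: "\<epsilon> \<in> S'" using simple_graph_edgeD[OF graph' re] by auto
  have rg: "\<rho> \<noteq> \<gamma>" using re ge by auto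
  define P where "P = insert (\<rho>, \<epsilon>) (Pair \<gamma> ` neighbours E' S' \<gamma>)"
  have P_cases: "q = (\<rho>, \<epsilon>) \<or> (\<exists>k. q = (\<gamma>, k) \<and> {\<gamma>, k} \<in> E' \<and> k \<noteq> \<gamma> \<and> k \<noteq> \<epsilon>)" if "q \<in> P" for q
    using that ge simple_graph_edgeD(1)[OF graph'] by (auto simp: P_def neighbours_def)
  have "card P \<le> graph_degree E S \<alpha>"
  proof (rule card_le_degree_if_bracket_hits[OF a])
    fix p assume "p \<in> P"
    then consider "p = (\<rho>, \<epsilon>)" | k where "p = (\<gamma>, k)" "k \<in> S'" "{\<gamma>, k} \<in> E'"
      by (auto simp: P_def neighbours_def)
    then have "\<exists>z\<in>vertex_space S'. \<forall>q\<in>P. N_bracket E' x z $ fst q $ snd q = (if q = p then 1 else 0)"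
    proof cases
      case 1
      define z where "z = (1 / x $ \<rho>) *\<^sub>R unit_vec \<epsilon>"
      have "z \<in> vertex_space S'" using eS by (simp add: z_def vertex_space_scaleR unit_vec_in_vertex_space)
      moreover have "N_bracket E' x z $ fst q $ snd q = (if q = p then 1 else 0)" if "q \<in> P" for q
        using P_cases[OF that] re rne xr rg eg 1 by (auto simp: N_bracket_nth z_def unit_vec_nth)
      ultimately show ?thesis by blast
    next
      case 2
      \<comment> \<open>the correction term along \<open>\<epsilon>\<close> cancels the entry at \<open>\<rho>\<epsilon>\<close> when \<open>k = \<rho>\<close>\<close>
      define s where "s = (if \<rho> = k then x $ \<epsilon> / (x $ \<gamma> * x $ \<rho>) else 0)"
      define z where "z = (1 / x $ \<gamma>) *\<^sub>R unit_vec k + s *\<^sub>R unit_vec \<epsilon>"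
      have "k \<noteq> \<epsilon>" "k \<noteq> \<gamma>" using 2 ge simple_graph_edgeD(1)[OF graph' 2(3)] by auto
      have "z \<in> vertex_space S'"
        using eS 2 by (simp add: z_def vertex_space_add vertex_space_scaleR unit_vec_in_vertex_space)
      moreover have "N_bracket E' x z $ fst q $ snd q = (if q = p then 1 else 0)" if "q \<in> P" for q
        using P_cases[OF that] re rne xr xg rg eg \<open>k \<noteq> \<epsilon>\<close> \<open>k \<noteq> \<gamma>\<close> 2
        by (auto simp: N_bracket_nth z_def unit_vec_nth s_def)
      ultimately show ?thesis by blast
    qed
    then show "\<exists>z\<in>vertex_space S'. \<forall>q\<in>P.
        N_bracket E' (T (unit_vec \<alpha>)) z $ fst q $ snd q = (if q = p then 1 else 0)"
      by (simp add: x_def)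
  qed
  moreover have "card P = graph_degree E' S' \<gamma> + 1"
  proof -
    have "(\<rho>, \<epsilon>) \<notin> Pair \<gamma> ` neighbours E' S' \<gamma>" using rg by auto
    then show ?thesis by (simp add: P_def card_image inj_on_def)
  qed
  ultimately show ?thesis by simp
qed

end

locale bracket_compatible_iso =
  fwd: bracket_compatible S E S' E' T T' + bwd: bracket_compatible S' E' S E T' T
  for S :: "'a::finite set" and E and S' :: "'b::finite set" and E' and T and T'
begin

abbreviation col :: "'a \<Rightarrow> real^'b" where
  "col \<alpha> \<equiv> T (unit_vec \<alpha>)"

abbreviation deg :: "'a \<Rightarrow> nat" where
  "deg \<alpha> \<equiv> graph_degree E S \<alpha>"

abbreviation deg' :: "'b \<Rightarrow> nat" where
  "deg' \<rho> \<equiv> graph_degree E' S' \<rho>"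

lemma independent_family_columns: "independent_family S col"
  unfolding independent_family_def
proof (intro allI impI)
  fix c assume "(\<Sum>\<alpha>\<in>S. c \<alpha> *\<^sub>R col \<alpha>) = 0"
  then have "T' (\<Sum>\<alpha>\<in>S. c \<alpha> *\<^sub>R col \<alpha>) = 0" using linear_0[OF bwd.lin] by simp
  moreover have "T' (\<Sum>\<alpha>\<in>S. c \<alpha> *\<^sub>R col \<alpha>) = (\<Sum>\<alpha>\<in>S. c \<alpha> *\<^sub>R unit_vec \<alpha>)"
    by (auto simp: linear_sum[OF bwd.lin] linear_scale[OF bwd.lin]
        dest: bwd.right_inverse[OF unit_vec_in_vertex_space] intro!: sum.cong)
  moreover have "(\<Sum>\<alpha>\<in>S. c \<alpha> *\<^sub>R unit_vec \<alpha>) $ \<beta> = (if \<beta> \<in> S then c \<beta> else 0)" for \<beta>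
    by (simp add: sum_component unit_vec_nth if_distrib cong: if_cong)
  ultimately show "\<forall>\<alpha>\<in>S. c \<alpha> = 0" by (metis zero_index)
qed

lemma exists_nonzero_transversal:
  "\<exists>\<sigma>. inj_on \<sigma> S \<and> \<sigma> ` S \<subseteq> S' \<and> (\<forall>\<alpha>\<in>S. col \<alpha> $ \<sigma> \<alpha> \<noteq> 0)"
proof (rule independent_family_nonzero_transversal)
  show "col \<alpha> $ \<rho> = 0" if "\<alpha> \<in> S" "\<rho> \<notin> S'" for \<alpha> \<rho>
    using fwd.maps[OF unit_vec_in_vertex_space[OF that(1)]] that(2) by (simp add: vertex_space_def)
qed (simp_all add: independent_family_columns)

lemma column_minors_nonedge:
  assumes a: "\<alpha> \<in> S" and b: "\<beta> \<in> S" and ne: "{\<alpha>, \<beta>} \<notin> E" and kl: "{k, l} \<in> E'"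
  shows "col \<alpha> $ k * col \<beta> $ l = col \<alpha> $ l * col \<beta> $ k"
proof -
  have "N_bracket E (unit_vec \<alpha>) (unit_vec \<beta>) = N_bracket E 0 0"
    using ne by (auto simp: vec_eq_iff N_bracket_nth unit_vec_nth insert_commute)
  then have "N_bracket E' (col \<alpha>) (col \<beta>) = N_bracket E' (T 0) (T 0)"
    using fwd.bracket[OF unit_vec_in_vertex_space[OF a] unit_vec_in_vertex_space[OF b]]
    by (simp add: vertex_space_zero)
  then have "N_bracket E' (col \<alpha>) (col \<beta>) $ k $ l = 0" by (simp add: linear_0[OF fwd.lin])
  then show ?thesis using kl by (simp add: N_bracket_nth)
qed

end

sublocale bracket_compatible_iso \<subseteq> swap: bracket_compatible_iso S' E' S E T' T
  by (intro bracket_compatible_iso.intro fwd.bracket_compatible_axioms bwd.bracket_compatible_axioms)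

context bracket_compatible_iso
begin

text \<open>The transversals in both directions are bijections, and comparing the degree sums
  shows that the inequalities \<open>deg' (\<sigma> \<alpha>) \<le> deg \<alpha>\<close> are equalities.\<close>

lemma exists_degree_preserving_transversal:
  "\<exists>\<sigma>. bij_betw \<sigma> S S' \<and> (\<forall>\<alpha>\<in>S. col \<alpha> $ \<sigma> \<alpha> \<noteq> 0) \<and> (\<forall>\<alpha>\<in>S. deg' (\<sigma> \<alpha>) = deg \<alpha>)"
proof -
  obtain \<sigma> where si: "inj_on \<sigma> S" and ss: "\<sigma> ` S \<subseteq> S'" and sn: "\<forall>\<alpha>\<in>S. col \<alpha> $ \<sigma> \<alpha> \<noteq> 0"
    using exists_nonzero_transversal by blast
  obtain \<tau> where ti: "inj_on \<tau> S'" and ts: "\<tau> ` S' \<subseteq> S" and tn: "\<forall>\<rho>\<in>S'. T' (unit_vec \<rho>) $ \<tau> \<rho> \<noteq> 0"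
    using swap.exists_nonzero_transversal by blast
  have c1: "card S \<le> card S'" and c2: "card S' \<le> card S"
    using card_inj_on_le[OF si ss] card_inj_on_le[OF ti ts] by simp_all
  have "\<sigma> ` S = S'" using ss c1 c2 by (intro card_subset_eq) (auto simp: card_image[OF si])
  then have bs: "bij_betw \<sigma> S S'" using si by (simp add: bij_betw_def)
  have "\<tau> ` S' = S" using ts c1 c2 by (intro card_subset_eq) (auto simp: card_image[OF ti])
  then have bt: "bij_betw \<tau> S' S" using ti by (simp add: bij_betw_def)
  have le1: "\<forall>\<alpha>\<in>S. deg' (\<sigma> \<alpha>) \<le> deg \<alpha>" using fwd.degree_le_of_nonzero_entry sn by blast
  have le2: "\<forall>\<rho>\<in>S'. deg (\<tau> \<rho>) \<le> deg' \<rho>" using bwd.degree_le_of_nonzero_entry tn by blast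
  have "(\<Sum>\<alpha>\<in>S. deg \<alpha>) = (\<Sum>\<rho>\<in>S'. deg (\<tau> \<rho>))" by (rule sum.reindex_bij_betw[OF bt, symmetric])
  also have "\<dots> \<le> (\<Sum>\<rho>\<in>S'. deg' \<rho>)" using le2 by (intro sum_mono) auto
  also have "\<dots> = (\<Sum>\<alpha>\<in>S. deg' (\<sigma> \<alpha>))" by (rule sum.reindex_bij_betw[OF bs, symmetric])
  finally have sle: "(\<Sum>\<alpha>\<in>S. deg \<alpha>) \<le> (\<Sum>\<alpha>\<in>S. deg' (\<sigma> \<alpha>))" .
  have "\<forall>\<alpha>\<in>S. deg' (\<sigma> \<alpha>) = deg \<alpha>"
  proof (rule ccontr)
    assume "\<not> ?thesis"
    then obtain a where "a \<in> S" "deg' (\<sigma> a) < deg a" using le1 by (meson le_neq_implies_less)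
    then have "(\<Sum>\<alpha>\<in>S. deg' (\<sigma> \<alpha>)) < (\<Sum>\<alpha>\<in>S. deg \<alpha>)"
      using le1 by (intro sum_strict_mono_ex1) auto
    then show False using sle by simp
  qed
  then show ?thesis using bs sn by blast
qed

context
  fixes \<sigma> :: "'a \<Rightarrow> 'b"
  assumes bij: "bij_betw \<sigma> S S'" and nonzero: "\<And>\<alpha>. \<alpha> \<in> S \<Longrightarrow> col \<alpha> $ \<sigma> \<alpha> \<noteq> 0"
    and degree: "\<And>\<alpha>. \<alpha> \<in> S \<Longrightarrow> deg' (\<sigma> \<alpha>) = deg \<alpha>"
begin

lemma sigma_in: "\<alpha> \<in> S \<Longrightarrow> \<sigma> \<alpha> \<in> S'"
  using bij by (auto simp: bij_betw_def)

lemma dominates_if_nonzero_entry: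
  assumes m: "\<mu> \<in> S" and r: "col \<mu> $ \<rho> \<noteq> 0"
  shows "dominates E' \<rho> (\<sigma> \<mu>)"
  unfolding dominates_def
proof (intro allI impI)
  fix e assume re: "{\<rho>, e} \<in> E'" and en: "e \<noteq> \<sigma> \<mu>"
  show "{\<sigma> \<mu>, e} \<in> E'"
  proof (rule ccontr)
    assume "{\<sigma> \<mu>, e} \<notin> E'"
    from fwd.degree_lt_of_nonzero_entries[OF m nonzero[OF m] r re en this] degree[OF m]
    show False by simp
  qed
qed

lemma sigma_in_twin_class:
  assumes \<mu>: "\<mu> \<in> S" and \<rho>: "\<rho> \<in> twin_class E' S' \<gamma>" and \<kappa>: "\<kappa> \<in> twin_class E' S' \<gamma>"
    and \<rho>\<mu>: "T' (unit_vec \<rho>) $ \<mu> \<noteq> 0" and \<mu>\<kappa>: "col \<mu> $ \<kappa> \<noteq> 0"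
  shows "\<sigma> \<mu> \<in> twin_class E' S' \<gamma>"
proof -
  have "deg \<mu> \<le> deg' \<rho>"
    using bwd.degree_le_of_nonzero_entry[of \<rho> \<mu>] \<rho> \<rho>\<mu> by (simp add: twin_class_def)
  moreover have "deg' \<kappa> \<le> deg \<mu>" by (rule fwd.degree_le_of_nonzero_entry[OF \<mu> \<mu>\<kappa>])
  ultimately have deg_eq: "deg' \<kappa> = deg' (\<sigma> \<mu>)" "deg' (\<sigma> \<mu>) = deg' \<gamma>"
    using \<rho> \<kappa> degree[OF \<mu>] by (auto simp: twin_class_def)
  have "twins E' \<kappa> (\<sigma> \<mu>)"
    using twins_if_dominates_same_degree[OF fwd.graph' dominates_if_nonzero_entry[OF \<mu> \<mu>\<kappa>] deg_eq(1)]
      \<kappa> by (simp add: twin_class_def)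
  then have "twins E' (\<sigma> \<mu>) \<gamma>"
    using \<kappa> by (auto simp: twin_class_def intro: twins_trans twins_sym)
  then show ?thesis using sigma_in[OF \<mu>] deg_eq(2) by (simp add: twin_class_def)
qed

text \<open>The columns whose restriction to a twin class is nonzero come from vertices that
  \<open>\<sigma>\<close> maps into the class; expanding \<open>T (T' \<rho>) = \<rho>\<close> gives:\<close>

lemma unit_vec_in_span_twin_columns:
  assumes \<rho>: "\<rho> \<in> twin_class E' S' \<gamma>"
  defines "K \<equiv> twin_class E' S' \<gamma>"
  shows "unit_vec \<rho> \<in> span ((\<lambda>\<mu>. restrict_vec K (col \<mu>)) ` {\<mu>\<in>S. \<sigma> \<mu> \<in> K})"
proof -
  have rS: "\<rho> \<in> S'" using \<rho> by (simp add: twin_class_def)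
  define c where "c = T' (unit_vec \<rho>)"
  have cS: "c \<in> vertex_space S" and Tc: "T c = unit_vec \<rho>"
    using fwd.right_inverse[OF unit_vec_in_vertex_space[OF rS]] by (auto simp: c_def)
  have "c = (\<Sum>\<mu>\<in>S. c $ \<mu> *\<^sub>R unit_vec \<mu>)"
    by (rule vec_eq_sum_unit_vec) (use cS in \<open>auto simp: vertex_space_def\<close>)
  then have "T c = (\<Sum>\<mu>\<in>S. c $ \<mu> *\<^sub>R col \<mu>)"
    by (metis (no_types, lifting) fwd.lin linear_scale linear_sum sum.cong)
  then have "restrict_vec K (unit_vec \<rho>) = (\<Sum>\<mu>\<in>S. c $ \<mu> *\<^sub>R restrict_vec K (col \<mu>))"
    using Tc by (simp add: linear_sum[OF linear_restrict_vec] linear_scale[OF linear_restrict_vec])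
  also have "\<dots> = (\<Sum>\<mu>\<in>{\<mu>\<in>S. \<sigma> \<mu> \<in> K}. c $ \<mu> *\<^sub>R restrict_vec K (col \<mu>))"
  proof (rule sum.mono_neutral_right)
    show "\<forall>\<mu>\<in>S - {\<mu>\<in>S. \<sigma> \<mu> \<in> K}. c $ \<mu> *\<^sub>R restrict_vec K (col \<mu>) = 0"
    proof (intro ballI, rule ccontr)
      fix \<mu> assume \<mu>: "\<mu> \<in> S - {\<mu>\<in>S. \<sigma> \<mu> \<in> K}" and "c $ \<mu> *\<^sub>R restrict_vec K (col \<mu>) \<noteq> 0"
      then obtain \<kappa> where "\<kappa> \<in> K" "col \<mu> $ \<kappa> \<noteq> 0" "c $ \<mu> \<noteq> 0"
        by (auto simp: restrict_vec_def vec_eq_iff split: if_splits)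
      then have "\<sigma> \<mu> \<in> K" using sigma_in_twin_class \<mu> \<rho> by (simp add: K_def c_def)
      then show False using \<mu> by simp
    qed
  qed auto
  also have "\<dots> \<in> span ((\<lambda>\<mu>. restrict_vec K (col \<mu>)) ` {\<mu>\<in>S. \<sigma> \<mu> \<in> K})"
    by (intro span_sum span_scale span_base) auto
  moreover have "restrict_vec K (unit_vec \<rho>) = unit_vec \<rho>"
    using \<rho> by (auto simp: restrict_vec_nth unit_vec_nth vec_eq_iff K_def)
  ultimately show ?thesis by simp
qed

lemma card_preimage_sigma:
  assumes "K \<subseteq> S'"
  shows "card {\<mu>\<in>S. \<sigma> \<mu> \<in> K} = card K"
proof (rule bij_betw_same_card, rule bij_betw_subset[OF bij])
  have "K \<subseteq> \<sigma> ` S" using bij_betw_imp_surj_on[OF bij] assms by blast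
  then show "\<sigma> ` {\<mu>\<in>S. \<sigma> \<mu> \<in> K} = K" by auto
qed auto

lemma twin_class_if_nonedge_to_edge:
  assumes a: "\<alpha> \<in> S" and b: "\<beta> \<in> S" and ne: "{\<alpha>, \<beta>} \<notin> E" and edge: "{\<sigma> \<alpha>, \<sigma> \<beta>} \<in> E'"
  shows "\<sigma> \<beta> \<in> twin_class E' S' (\<sigma> \<alpha>)"
proof -
  have "col \<alpha> $ \<sigma> \<alpha> * col \<beta> $ \<sigma> \<beta> \<noteq> 0" using nonzero[OF a] nonzero[OF b] by simp
  then have "col \<alpha> $ \<sigma> \<beta> * col \<beta> $ \<sigma> \<alpha> \<noteq> 0" using column_minors_nonedge[OF a b ne edge] by simp
  then have ab: "col \<alpha> $ \<sigma> \<beta> \<noteq> 0" and ba: "col \<beta> $ \<sigma> \<alpha> \<noteq> 0" by auto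
  have "deg' (\<sigma> \<beta>) = deg' (\<sigma> \<alpha>)"
    using fwd.degree_le_of_nonzero_entry[OF a ab] fwd.degree_le_of_nonzero_entry[OF b ba]
      degree[OF a] degree[OF b] by simp
  moreover have "twins E' (\<sigma> \<beta>) (\<sigma> \<alpha>)"
    using twins_if_dominates_same_degree[OF fwd.graph' dominates_if_nonzero_entry[OF a ab]]
      calculation sigma_in[OF b] by simp
  ultimately show ?thesis using sigma_in[OF b] by (simp add: twin_class_def)
qed

text \<open>The twin class of \<open>\<sigma> \<alpha>\<close> is a clique, so \<open>[T \<alpha>, T \<beta>] = 0\<close> makes both columns parallel
  on it; then fewer columns than the class has elements would span it.\<close>

lemma preserves_nonedges:
  assumes a: "\<alpha> \<in> S" and b: "\<beta> \<in> S" and ab: "\<alpha> \<noteq> \<beta>" and ne: "{\<alpha>, \<beta>} \<notin> E"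
  shows "{\<sigma> \<alpha>, \<sigma> \<beta>} \<notin> E'"
proof
  assume edge: "{\<sigma> \<alpha>, \<sigma> \<beta>} \<in> E'"
  define K where "K = twin_class E' S' (\<sigma> \<alpha>)"
  define M where "M = {\<mu>\<in>S. \<sigma> \<mu> \<in> K}"
  have K: "\<sigma> \<alpha> \<in> K" "\<sigma> \<beta> \<in> K"
    using twin_class_if_nonedge_to_edge[OF a b ne edge] sigma_in[OF a]
    by (auto simp: K_def twin_class_def twins_refl)
  have "{k, l} \<in> E'" if "k \<in> K" "l \<in> K" "k \<noteq> l" for k l
    using adjacent_twins_clique[OF edge _ _ _ _ that(3)] simple_graph_edgeD(1)[OF fwd.graph' edge]
      K(2) that(1,2) by (simp add: K_def twin_class_def)
  then have "col \<alpha> $ k * col \<beta> $ l = col \<alpha> $ l * col \<beta> $ k" if "k \<in> K" "l \<in> K" for k l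
    using column_minors_nonedge[OF a b ne] that by (cases "k = l") auto
  then have parallel: "restrict_vec K (col \<alpha>) = 0 \<or>
      restrict_vec K (col \<beta>) \<in> span {restrict_vec K (col \<alpha>)}"
    by (rule restrict_vec_parallel_if_minors_vanish)
  have "independent (unit_vec ` K)"
    by (rule independent_substdbasis) (auto simp: Basis_vec_def)
  moreover have "unit_vec ` K \<subseteq> span ((\<lambda>\<mu>. restrict_vec K (col \<mu>)) ` M)"
    using unit_vec_in_span_twin_columns by (auto simp: K_def M_def)
  moreover have "\<alpha> \<in> M" "\<beta> \<in> M" using a b K by (auto simp: M_def)
  ultimately have "card (unit_vec ` K) < card M"
    using parallel ab card_lt_if_redundant_spanning[of M "unit_vec ` K" "\<lambda>\<mu>. restrict_vec K (col \<mu>)"]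
    by (auto simp: span_zero)
  moreover have "inj_on unit_vec K" by (rule inj_onI) (metis unit_vec_nth one_neq_zero)
  moreover have "card M = card K"
    unfolding M_def by (rule card_preimage_sigma) (auto simp: K_def twin_class_def)
  ultimately show False by (simp add: card_image)
qed

lemma neighbours_sigma:
  assumes a: "\<alpha> \<in> S"
  shows "neighbours E' S' (\<sigma> \<alpha>) = \<sigma> ` neighbours E S \<alpha>"
proof -
  have "neighbours E' S' (\<sigma> \<alpha>) \<subseteq> \<sigma> ` neighbours E S \<alpha>"
  proof
    fix r assume r: "r \<in> neighbours E' S' (\<sigma> \<alpha>)"
    then obtain c where c: "c \<in> S" "r = \<sigma> c"
      using bij_betw_imp_surj_on[OF bij] by (auto simp: neighbours_def)
    then have "\<alpha> \<noteq> c" using r simple_graph_edgeD(1)[OF fwd.graph'] by (auto simp: neighbours_def)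
    then have "{\<alpha>, c} \<in> E" using preserves_nonedges[OF a c(1)] r c by (auto simp: neighbours_def)
    then show "r \<in> \<sigma> ` neighbours E S \<alpha>" using c by (auto simp: neighbours_def)
  qed
  moreover have "card (\<sigma> ` neighbours E S \<alpha>) = deg' (\<sigma> \<alpha>)"
    using degree[OF a] bij_betw_imp_inj_on[OF bij]
    by (simp add: card_image inj_on_subset neighbours_def)
  ultimately show ?thesis
    by (intro card_subset_eq) (simp_all add: finite_neighbours[OF fwd.graph'])
qed

lemma graph_iso_sigma: "graph_iso S E S' E'"
  unfolding graph_iso_def
proof (intro exI conjI ballI)
  fix a b assume a: "a \<in> S" and b: "b \<in> S"
  have "{a, b} \<in> E \<longleftrightarrow> \<sigma> b \<in> \<sigma> ` neighbours E S a"
    using b bij_betw_imp_inj_on[OF bij] by (auto simp: neighbours_def inj_on_def)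
  also have "\<dots> \<longleftrightarrow> {\<sigma> a, \<sigma> b} \<in> E'"
    using neighbours_sigma[OF a] sigma_in[OF b] by (auto simp: neighbours_def)
  finally show "{a, b} \<in> E \<longleftrightarrow> {\<sigma> a, \<sigma> b} \<in> E'" .
qed (rule bij)

end

lemma graph_iso: "graph_iso S E S' E'"
  using exists_degree_preserving_transversal graph_iso_sigma by blast

end

section \<open>Continuous homomorphisms of the groups\<close>

lemma linear_if_additive_continuous:
  fixes f :: "'x::real_normed_vector \<Rightarrow> 'y::real_normed_vector"
  assumes add: "\<And>a b. f (a + b) = f a + f b" and cont: "continuous_on UNIV f"
  shows "linear f"
proof -
  interpret additive f by unfold_locales (rule add)
  have fn: "f (of_nat n *\<^sub>R y) = of_nat n *\<^sub>R f y" for n y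
  proof (induction n)
    case 0 then show ?case by (simp add: zero)
  next
    case (Suc n)
    have "f (of_nat (Suc n) *\<^sub>R y) = f (y + of_nat n *\<^sub>R y)" by (simp add: algebra_simps)
    also have "\<dots> = f y + of_nat n *\<^sub>R f y" using Suc add by simp
    finally show ?case by (simp add: algebra_simps)
  qed
  have fi: "f (of_int k *\<^sub>R y) = of_int k *\<^sub>R f y" for k y
  proof (cases "k \<ge> 0")
    case True
    define n where "n = nat k"
    have k: "of_int k = (of_nat n :: real)" using True by (simp add: n_def)
    show ?thesis unfolding k by (rule fn)
  next
    case False
    define n where "n = nat (- k)"
    have k: "of_int k = - (of_nat n :: real)" using False by (simp add: n_def)
    have "f (of_int k *\<^sub>R y) = f (- (of_nat n *\<^sub>R y))" unfolding k by simp
    also have "\<dots> = - f (of_nat n *\<^sub>R y)" by (rule minus)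
    also have "\<dots> = of_int k *\<^sub>R f y" unfolding k fn by simp
    finally show ?thesis .
  qed
  have fq: "f (r *\<^sub>R y) = r *\<^sub>R f y" if rq: "r \<in> \<rat>" for r y
  proof -
    obtain a b where b: "0 < b" and r: "r = of_int a / of_int b" using Rats_cases'[OF rq] by metis
    have bz: "real_of_int b \<noteq> 0" using b by simp
    have "of_int b *\<^sub>R (r *\<^sub>R y) = of_int a *\<^sub>R y" using bz by (simp add: r)
    then have "of_int b *\<^sub>R f (r *\<^sub>R y) = of_int a *\<^sub>R f y" using fi by metis
    then have "(1 / of_int b) *\<^sub>R (of_int b *\<^sub>R f (r *\<^sub>R y)) = (1 / of_int b) *\<^sub>R (of_int a *\<^sub>R f y)" by simp
    then show ?thesis using bz by (simp add: r)
  qed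
  \<comment> \<open>two continuous functions of \<open>s\<close> agreeing on the dense set \<open>\<rat>\<close>\<close>
  have sc: "f (r *\<^sub>R y) = r *\<^sub>R f y" for r y
  proof -
    define g where "g s = f (s *\<^sub>R y) - s *\<^sub>R f y" for s
    have "continuous_on UNIV g"
      unfolding g_def
      by (intro continuous_intros continuous_on_compose2[OF cont]) auto
    then have "continuous_on (closure \<rat>) g" by (simp add: Rats_closure_real)
    moreover have "\<And>s. s \<in> \<rat> \<Longrightarrow> g s = 0" using fq by (simp add: g_def)
    moreover have "r \<in> closure \<rat>" using Rats_closure_real by simp
    ultimately have "g r = 0" by (rule continuous_constant_on_closure)
    then show ?thesis by (simp add: g_def)
  qed
  show ?thesis by (rule linearI) (use add sc in auto)
qed

definition edge_form :: "'a::finite set set \<Rightarrow> real^'a^'a \<Rightarrow> bool" where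
  "edge_form E c \<longleftrightarrow> (\<forall>i j. c $ i $ j = - (c $ j $ i)) \<and> (\<forall>i j. {i, j} \<notin> E \<longrightarrow> c $ i $ j = 0)"

lemma Pair_in_N_carrier_iff: "(v, c) \<in> N_carrier S E \<longleftrightarrow> v \<in> vertex_space S \<and> edge_form E c"
  by (simp add: N_carrier_def vertex_space_def edge_form_def)

lemma N_mult_Pair: "N_mult E (v, c) (w, d) = (v + w, c + d + (1/2) *\<^sub>R N_bracket E v w)"
  by (simp add: N_mult_def)

lemma edge_form_antisym: "edge_form E c \<Longrightarrow> c $ j $ i = - (c $ i $ j)"
  and edge_form_nonedge: "edge_form E c \<Longrightarrow> {i, j} \<notin> E \<Longrightarrow> c $ i $ j = 0"
  unfolding edge_form_def by blast+

lemma edge_form_zero: "edge_form E 0"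
  by (simp add: edge_form_def)

lemma edge_form_add:
  assumes c: "edge_form E c" and d: "edge_form E d"
  shows "edge_form E (c + d)"
  unfolding edge_form_def
proof (intro conjI allI impI)
  show "(c + d) $ i $ j = - ((c + d) $ j $ i)" for i j
    using edge_form_antisym[OF c, of i j] edge_form_antisym[OF d, of i j] by simp
  show "(c + d) $ i $ j = 0" if "{i, j} \<notin> E" for i j
    using edge_form_nonedge[OF c that] edge_form_nonedge[OF d that] by simp
qed

lemma edge_form_scaleR:
  assumes c: "edge_form E c"
  shows "edge_form E (r *\<^sub>R c)"
  unfolding edge_form_def
proof (intro conjI allI impI)
  show "(r *\<^sub>R c) $ i $ j = - ((r *\<^sub>R c) $ j $ i)" for i j
    using edge_form_antisym[OF c, of i j] by simp
  show "(r *\<^sub>R c) $ i $ j = 0" if "{i, j} \<notin> E" for i j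
    using edge_form_nonedge[OF c that] by simp
qed

lemma edge_form_N_bracket: "edge_form E (N_bracket E x y)"
  by (simp add: edge_form_def N_bracket_nth insert_commute)

lemma N_mult_closed:
  "x \<in> N_carrier S E \<Longrightarrow> y \<in> N_carrier S E \<Longrightarrow> N_mult E x y \<in> N_carrier S E"
  by (cases x, cases y)
    (simp add: Pair_in_N_carrier_iff N_mult_Pair vertex_space_add edge_form_add
      edge_form_scaleR edge_form_N_bracket)

lemma edge_form_eq_sum_brackets:
  assumes graph: "simple_graph S E" and c: "edge_form E c"
  shows "c = (\<Sum>i\<in>S. N_bracket E (unit_vec i) ((1/2) *\<^sub>R c $ i))"
proof -
  have fin: "finite S" using graph by (simp add: simple_graph_def)
  have "(\<Sum>i\<in>S. N_bracket E (unit_vec i) ((1/2) *\<^sub>R c $ i)) $ k $ l = c $ k $ l" for k l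
  proof (cases "{k, l} \<in> E")
    case True
    then have "k \<in> S" "l \<in> S" using simple_graph_edgeD[OF graph] by auto
    have "N_bracket E (unit_vec i) ((1/2) *\<^sub>R c $ i) $ k $ l
        = (if k = i then c $ i $ l / 2 else 0) - (if l = i then c $ i $ k / 2 else 0)" for i
      using True by (simp add: N_bracket_nth unit_vec_nth)
    then have "(\<Sum>i\<in>S. N_bracket E (unit_vec i) ((1/2) *\<^sub>R c $ i)) $ k $ l
        = (\<Sum>i\<in>S. (if k = i then c $ i $ l / 2 else 0)) - (\<Sum>i\<in>S. (if l = i then c $ i $ k / 2 else 0))"
      by (simp only: sum_component sum_subtractf)
    also have "\<dots> = c $ k $ l / 2 - c $ l $ k / 2"
      using fin \<open>k \<in> S\<close> \<open>l \<in> S\<close> by simp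
    also have "\<dots> = c $ k $ l" using edge_form_antisym[OF c, of k l] by simp
    finally show ?thesis .
  next
    case False
    then show ?thesis by (simp add: sum_component N_bracket_nth edge_form_nonedge[OF c])
  qed
  then show ?thesis by (simp add: vec_eq_iff)
qed

locale N_hom =
  fixes S :: "'a::finite set" and E :: "'a set set" and S' :: "'b::finite set" and E' :: "'b set set"
    and \<phi> :: "'a Nelem \<Rightarrow> 'b Nelem"
  assumes graph: "simple_graph S E"
    and maps: "\<And>x. x \<in> N_carrier S E \<Longrightarrow> \<phi> x \<in> N_carrier S' E'"
    and hom: "\<And>x y. x \<in> N_carrier S E \<Longrightarrow> y \<in> N_carrier S E \<Longrightarrow>
      \<phi> (N_mult E x y) = N_mult E' (\<phi> x) (\<phi> y)"
begin

lemma vec_in_N_carrier: "v \<in> vertex_space S \<Longrightarrow> (v, 0) \<in> N_carrier S E"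
  and center_in_N_carrier: "edge_form E c \<Longrightarrow> (0, c) \<in> N_carrier S E"
  by (simp_all add: Pair_in_N_carrier_iff edge_form_zero vertex_space_zero)

text \<open>\<open>(a, 0) (b, 0) = (b, 0) (a, 0) (0, [a, b])\<close>, and comparing both sides after applying \<open>\<phi>\<close>
  determines \<open>\<phi> (0, [a, b])\<close>.\<close>

lemma hom_commutator:
  assumes a: "a \<in> vertex_space S" and b: "b \<in> vertex_space S"
  shows "\<phi> (0, N_bracket E a b) = (0, N_bracket E' (fst (\<phi> (a, 0))) (fst (\<phi> (b, 0))))"
proof -
  have ab: "(a, 0) \<in> N_carrier S E" "(b, 0) \<in> N_carrier S E"
    and z: "(0, N_bracket E a b) \<in> N_carrier S E"
    using a b by (simp_all add: vec_in_N_carrier center_in_N_carrier edge_form_N_bracket)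
  have "N_mult E (a, 0) (b, 0) = N_mult E (N_mult E (b, 0) (a, 0)) (0, N_bracket E a b)"
    by (simp add: N_mult_Pair N_bracket_antisym[of E b a] algebra_simps)
  then have "N_mult E' (\<phi> (a, 0)) (\<phi> (b, 0))
      = N_mult E' (N_mult E' (\<phi> (b, 0)) (\<phi> (a, 0))) (\<phi> (0, N_bracket E a b))"
    using hom[OF ab] hom[OF N_mult_closed[OF ab(2,1)] z] hom[OF ab(2,1)] by simp
  moreover obtain A c1 where A: "\<phi> (a, 0) = (A, c1)" by fastforce
  moreover obtain B d1 where B: "\<phi> (b, 0) = (B, d1)" by fastforce
  moreover obtain u r where U: "\<phi> (0, N_bracket E a b) = (u, r)" by fastforce
  ultimately have "A + B = B + A + u"
    and "c1 + d1 + (1/2) *\<^sub>R N_bracket E' A B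
      = d1 + c1 + (1/2) *\<^sub>R N_bracket E' B A + r + (1/2) *\<^sub>R N_bracket E' (B + A) u"
    by (simp_all add: N_mult_Pair)
  then have "u = 0" "r = N_bracket E' A B"
    by (simp_all add: N_bracket_antisym[of E' B A] algebra_simps)
  then show ?thesis by (simp add: A B U)
qed

lemma fst_hom_add:
  assumes a: "a \<in> vertex_space S" and b: "b \<in> vertex_space S"
  shows "fst (\<phi> (a + b, 0)) = fst (\<phi> (a, 0)) + fst (\<phi> (b, 0))"
proof -
  have "N_mult E (a, 0) (b, 0) = N_mult E (a + b, 0) (0, N_bracket E ((1/2) *\<^sub>R a) b)"
    by (simp add: N_mult_Pair N_bracket_scaleR_left)
  moreover have "(a + b, 0) \<in> N_carrier S E" "(0, N_bracket E ((1/2) *\<^sub>R a) b) \<in> N_carrier S E"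
    using a b by (simp_all add: vec_in_N_carrier center_in_N_carrier edge_form_N_bracket vertex_space_add)
  ultimately have "N_mult E' (\<phi> (a, 0)) (\<phi> (b, 0))
      = N_mult E' (\<phi> (a + b, 0)) (\<phi> (0, N_bracket E ((1/2) *\<^sub>R a) b))"
    using hom[OF vec_in_N_carrier[OF a] vec_in_N_carrier[OF b]] hom by simp
  then show ?thesis
    using hom_commutator[OF vertex_space_scaleR[OF a] b] by (simp add: N_mult_def)
qed

lemma fst_hom_center_sum:
  assumes "finite A" "\<And>k. k \<in> A \<Longrightarrow> edge_form E (g k)"
  shows "fst (\<phi> (0, sum g A)) = (\<Sum>k\<in>A. fst (\<phi> (0, g k)))"
  using assms
proof (induction A rule: finite_induct)
  case empty
  have "\<phi> (0, 0) = N_mult E' (\<phi> (0, 0)) (\<phi> (0, 0))"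
    using hom[OF center_in_N_carrier[OF edge_form_zero] center_in_N_carrier[OF edge_form_zero]]
    by (simp add: N_mult_Pair)
  then show ?case by (simp add: N_mult_def prod_eq_iff)
next
  case (insert x A)
  have "edge_form E (sum g A)"
    using insert.prems by (induction A rule: infinite_finite_induct) (auto intro: edge_form_add edge_form_zero)
  then have "\<phi> (0, g x + sum g A) = N_mult E' (\<phi> (0, g x)) (\<phi> (0, sum g A))"
    using hom[OF center_in_N_carrier center_in_N_carrier] insert.prems by (simp add: N_mult_Pair)
  then show ?case using insert by (simp add: N_mult_def)
qed

lemma fst_hom_center:
  assumes c: "edge_form E c"
  shows "fst (\<phi> (0, c)) = 0"
proof -
  have row: "(1/2) *\<^sub>R c $ i \<in> vertex_space S" for i
    using edge_form_nonedge[OF c] simple_graph_edgeD(3)[OF graph] by (auto simp: vertex_space_def)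
  have "fst (\<phi> (0, c)) = fst (\<phi> (0, \<Sum>i\<in>S. N_bracket E (unit_vec i) ((1/2) *\<^sub>R c $ i)))"
    using arg_cong[OF edge_form_eq_sum_brackets[OF graph c], of "\<lambda>c. fst (\<phi> (0, c))"] .
  also have "\<dots> = (\<Sum>i\<in>S. fst (\<phi> (0, N_bracket E (unit_vec i) ((1/2) *\<^sub>R c $ i))))"
    using graph by (intro fst_hom_center_sum) (simp_all add: simple_graph_def edge_form_N_bracket)
  also have "\<dots> = 0"
    by (intro sum.neutral ballI) (simp add: hom_commutator[OF unit_vec_in_vertex_space row])
  finally show ?thesis .
qed

lemma fst_hom_Pair:
  assumes "(v, c) \<in> N_carrier S E"
  shows "fst (\<phi> (v, c)) = fst (\<phi> (v, 0))"
proof -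
  have v: "v \<in> vertex_space S" and c: "edge_form E c" using assms by (auto simp: Pair_in_N_carrier_iff)
  have "\<phi> (v, c) = N_mult E' (\<phi> (v, 0)) (\<phi> (0, c))"
    using hom[OF vec_in_N_carrier[OF v] center_in_N_carrier[OF c]] by (simp add: N_mult_Pair)
  then show ?thesis using fst_hom_center[OF c] by (simp add: N_mult_def)
qed

text \<open>On \<open>V\<close> the first component of \<open>\<phi>\<close> is additive and, through the extension \<open>F\<close>,
  continuous; it extends to a linear map of the ambient space by restricting first.\<close>

lemma exists_linear_part:
  assumes cont: "continuous_on UNIV F" and F: "\<And>x. x \<in> N_carrier S E \<Longrightarrow> F x = \<phi> x"
  obtains T where "linear T" "\<And>v c. (v, c) \<in> N_carrier S E \<Longrightarrow> fst (\<phi> (v, c)) = T v"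
proof
  define T where "T v = fst (F (restrict_vec S v, 0))" for v
  have T: "T v = fst (\<phi> (restrict_vec S v, 0))" for v
    using F[OF vec_in_N_carrier[OF restrict_vec_in_vertex_space]] by (simp add: T_def)
  show "linear T"
  proof (rule linear_if_additive_continuous)
    show "T (a + b) = T a + T b" for a b
      using fst_hom_add[OF restrict_vec_in_vertex_space restrict_vec_in_vertex_space]
      by (simp add: T linear_add[OF linear_restrict_vec])
    have "continuous_on UNIV (restrict_vec S)"
      by (rule linear_continuous_on) (simp add: linear_conv_bounded_linear[symmetric] linear_restrict_vec)
    then have "continuous_on UNIV (\<lambda>v. (restrict_vec S v, 0::real^'a^'a))"
      by (rule continuous_on_Pair[OF _ continuous_on_const])
    then have "continuous_on UNIV (\<lambda>v. F (restrict_vec S v, 0))"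
      by (rule continuous_on_compose2[OF cont]) auto
    then show "continuous_on UNIV T"
      unfolding T_def by (intro continuous_intros)
  qed
  show "fst (\<phi> (v, c)) = T v" if "(v, c) \<in> N_carrier S E" for v c
    using fst_hom_Pair[OF that] that by (simp add: T restrict_vec_id Pair_in_N_carrier_iff)
qed

lemma bracket_compatible:
  assumes graph': "simple_graph S' E'" and lin: "linear T"
    and T: "\<And>v c. (v, c) \<in> N_carrier S E \<Longrightarrow> fst (\<phi> (v, c)) = T v"
    and T': "\<And>w d. (w, d) \<in> N_carrier S' E' \<Longrightarrow> fst (\<psi> (w, d)) = T' w"
    and \<psi>: "\<And>y. y \<in> N_carrier S' E' \<Longrightarrow> \<psi> y \<in> N_carrier S E \<and> \<phi> (\<psi> y) = y"
  shows "bracket_compatible S E S' E' T T'"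
proof (rule bracket_compatible.intro)
  show "T x \<in> vertex_space S'" if "x \<in> vertex_space S" for x
    using maps[OF vec_in_N_carrier[OF that]] T[OF vec_in_N_carrier[OF that]]
    by (cases "\<phi> (x, 0)") (simp add: Pair_in_N_carrier_iff)
  show "T' z \<in> vertex_space S \<and> T (T' z) = z" if "z \<in> vertex_space S'" for z
  proof -
    have z: "(z, 0) \<in> N_carrier S' E'" using that by (simp add: Pair_in_N_carrier_iff edge_form_zero)
    obtain v c where vc: "\<psi> (z, 0) = (v, c)" by fastforce
    then have "(v, c) \<in> N_carrier S E" "\<phi> (v, c) = (z, 0)" using \<psi>[OF z] by auto
    moreover have "T' z = v" using T'[OF z] vc by simp
    ultimately show ?thesis using T by (fastforce simp: Pair_in_N_carrier_iff)
  qed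
  show "N_bracket E' (T x) (T y) = N_bracket E' (T x') (T y')"
    if "x \<in> vertex_space S" "y \<in> vertex_space S" "x' \<in> vertex_space S" "y' \<in> vertex_space S"
      "N_bracket E x y = N_bracket E x' y'" for x y x' y'
    using hom_commutator[of x y] hom_commutator[of x' y'] that T vec_in_N_carrier by simp
qed (use graph graph' lin in simp_all)

end

lemma smooth_imp_continuous: "smooth F \<Longrightarrow> continuous_on UNIV F"
  unfolding smooth_def by (metis Ck.simps(1))

lemma graph_iso_if_N_lie_isomorphic:
  assumes graph: "simple_graph S E" and graph': "simple_graph S' E'"
    and iso: "N_lie_isomorphic S E S' E'"
  shows "graph_iso S E S' E'"
proof -
  obtain \<phi> F G where bij: "bij_betw \<phi> (N_carrier S E) (N_carrier S' E')"
    and hom: "\<forall>x\<in>N_carrier S E. \<forall>y\<in>N_carrier S E. \<phi> (N_mult E x y) = N_mult E' (\<phi> x) (\<phi> y)"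
    and F: "smooth F" "\<forall>x\<in>N_carrier S E. F x = \<phi> x"
    and G: "smooth G" "\<forall>y\<in>N_carrier S' E'. G y \<in> N_carrier S E \<and> \<phi> (G y) = y"
    using iso unfolding N_lie_isomorphic_def N_lie_iso_def by blast
  have inj: "inj_on \<phi> (N_carrier S E)" and maps: "\<And>x. x \<in> N_carrier S E \<Longrightarrow> \<phi> x \<in> N_carrier S' E'"
    using bij by (auto simp: bij_betw_def)
  have G': "\<And>y. y \<in> N_carrier S' E' \<Longrightarrow> G y \<in> N_carrier S E \<and> \<phi> (G y) = y" using G(2) by blast
  have G\<phi>: "\<phi> x \<in> N_carrier S' E' \<and> G (\<phi> x) = x" if "x \<in> N_carrier S E" for x
    using inj_onD[OF inj _ _ that] G' maps[OF that] by auto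
  interpret fwd: N_hom S E S' E' \<phi>
    using graph maps hom by unfold_locales auto
  interpret bwd: N_hom S' E' S E G
  proof
    fix y1 y2 assume y: "y1 \<in> N_carrier S' E'" "y2 \<in> N_carrier S' E'"
    have "\<phi> (G (N_mult E' y1 y2)) = \<phi> (N_mult E (G y1) (G y2))"
      using G' y N_mult_closed[OF y] hom by simp
    then show "G (N_mult E' y1 y2) = N_mult E (G y1) (G y2)"
      by (rule inj_onD[OF inj]) (simp_all add: G' y N_mult_closed)
  qed (use graph' G' in auto)
  obtain T where T: "linear T" "\<And>v c. (v, c) \<in> N_carrier S E \<Longrightarrow> fst (\<phi> (v, c)) = T v"
    using fwd.exists_linear_part[OF smooth_imp_continuous[OF F(1)]] F(2) by blast
  obtain T' where T': "linear T'" "\<And>w d. (w, d) \<in> N_carrier S' E' \<Longrightarrow> fst (G (w, d)) = T' w"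
    using bwd.exists_linear_part[OF smooth_imp_continuous[OF G(1)]] by blast
  interpret bracket_compatible_iso S E S' E' T T'
    using fwd.bracket_compatible[OF graph' T T'(2) G'] bwd.bracket_compatible[OF graph T' T(2) G\<phi>]
    by (rule bracket_compatible_iso.intro)
  show ?thesis by (rule graph_iso)
qed

section \<open>Relabelling vertices\<close>

definition relabel :: "'b::finite set \<Rightarrow> ('b \<Rightarrow> 'a::finite) \<Rightarrow> 'a Nelem \<Rightarrow> 'b Nelem" where
  "relabel S' g x = ((\<chi> r. if r \<in> S' then fst x $ g r else 0),
                     (\<chi> r s. if r \<in> S' \<and> s \<in> S' then snd x $ g r $ g s else 0))"

lemma linear_relabel: "linear (relabel S' g)"
  by (rule linearI) (auto simp: relabel_def vec_eq_iff prod_eq_iff)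

lemma Ck_const: "Ck k (\<lambda>x. c)"
proof (induction k arbitrary: c)
  case (Suc k)
  have "\<forall>x. ((\<lambda>x. c) has_derivative (\<lambda>x v. 0) x) (at x)" by simp
  then show ?case using Suc by (auto intro!: exI[of _ "\<lambda>x v. 0"])
qed simp

lemma smooth_if_linear:
  fixes h :: "'x::euclidean_space \<Rightarrow> 'y::real_normed_vector"
  assumes "linear h"
  shows "smooth h"
  unfolding smooth_def
proof
  fix k
  have bl: "bounded_linear h" using assms by (simp add: linear_conv_bounded_linear)
  show "Ck k h"
  proof (cases k)
    case 0 then show ?thesis using bl by (simp add: linear_continuous_on)
  next
    case (Suc k')
    have "\<forall>x. (h has_derivative (\<lambda>x. h) x) (at x)" using bl by (simp add: bounded_linear_imp_has_derivative)
    then show ?thesis using Suc by (auto simp: Ck_const)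
  qed
qed

context
  fixes E :: "'a::finite set set" and S' :: "'b::finite set" and E' :: "'b set set"
    and g :: "'b \<Rightarrow> 'a"
  assumes graph': "simple_graph S' E'"
    and g_edge: "\<And>r s. r \<in> S' \<Longrightarrow> s \<in> S' \<Longrightarrow> {g r, g s} \<in> E \<longleftrightarrow> {r, s} \<in> E'"
begin

lemma relabel_in_N_carrier:
  assumes x: "x \<in> N_carrier S E"
  shows "relabel S' g x \<in> N_carrier S' E'"
proof -
  obtain v c where xv: "x = (v, c)" by fastforce
  have c: "edge_form E c" using x by (simp add: xv Pair_in_N_carrier_iff)
  have "edge_form E' (\<chi> r s. if r \<in> S' \<and> s \<in> S' then c $ g r $ g s else 0)"
    unfolding edge_form_def
  proof (intro conjI allI impI)
    show "(\<chi> r s. if r \<in> S' \<and> s \<in> S' then c $ g r $ g s else 0) $ i $ j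
        = - ((\<chi> r s. if r \<in> S' \<and> s \<in> S' then c $ g r $ g s else 0) $ j $ i)" for i j
      using edge_form_antisym[OF c, of "g i" "g j"] by auto
    show "(\<chi> r s. if r \<in> S' \<and> s \<in> S' then c $ g r $ g s else 0) $ i $ j = 0" if "{i, j} \<notin> E'" for i j
      using that g_edge edge_form_nonedge[OF c] by auto
  qed
  then show ?thesis
    unfolding xv relabel_def fst_conv snd_conv by (simp add: Pair_in_N_carrier_iff vertex_space_def)
qed

lemma relabel_N_mult: "relabel S' g (N_mult E x y) = N_mult E' (relabel S' g x) (relabel S' g y)"
proof -
  have bracket: "N_bracket E' (\<chi> r. if r \<in> S' then v $ g r else 0) (\<chi> r. if r \<in> S' then w $ g r else 0) $ r $ s
      = (if r \<in> S' \<and> s \<in> S' then N_bracket E v w $ g r $ g s else 0)" for v w r s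
  proof (cases "r \<in> S' \<and> s \<in> S'")
    case True
    then show ?thesis using g_edge[of r s] by (simp add: N_bracket_nth)
  next
    case False
    then have "{r, s} \<notin> E'" using simple_graph_edgeD(2,3)[OF graph'] by blast
    then show ?thesis using False by (auto simp: N_bracket_nth)
  qed
  show ?thesis by (auto simp: relabel_def N_mult_def vec_eq_iff bracket)
qed

end

lemma relabel_relabel:
  assumes graph: "simple_graph S E" and x: "x \<in> N_carrier S E"
    and f: "\<And>a. a \<in> S \<Longrightarrow> f a \<in> S'" and gf: "\<And>a. a \<in> S \<Longrightarrow> g (f a) = a"
  shows "relabel S f (relabel S' g x) = x"
proof -
  obtain v c where xv: "x = (v, c)" by fastforce
  have v: "v \<in> vertex_space S" and c: "edge_form E c" using x by (auto simp: xv Pair_in_N_carrier_iff)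
  have "c $ a $ b = 0" if "\<not> (a \<in> S \<and> b \<in> S)" for a b
    using that edge_form_nonedge[OF c] simple_graph_edgeD(2,3)[OF graph] by blast
  then show ?thesis using v f gf by (auto simp: xv relabel_def vec_eq_iff vertex_space_def)
qed

lemma N_lie_isomorphic_if_graph_iso:
  assumes graph: "simple_graph S E" and graph': "simple_graph S' E'" and iso: "graph_iso S E S' E'"
  shows "N_lie_isomorphic S E S' E'"
proof -
  obtain f where f: "bij_betw f S S'" and f_edge: "\<forall>a\<in>S. \<forall>b\<in>S. {a, b} \<in> E \<longleftrightarrow> {f a, f b} \<in> E'"
    using iso by (auto simp: graph_iso_def)
  define g where "g = inv_into S f"
  have fS: "\<And>a. a \<in> S \<Longrightarrow> f a \<in> S'" and gS: "\<And>r. r \<in> S' \<Longrightarrow> g r \<in> S"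
    using f bij_betw_inv_into[OF f] by (auto simp: g_def bij_betw_def)
  have gf: "\<And>a. a \<in> S \<Longrightarrow> g (f a) = a" and fg: "\<And>r. r \<in> S' \<Longrightarrow> f (g r) = r"
    using f by (simp_all add: g_def bij_betw_inv_into_left bij_betw_inv_into_right)
  have g_edge: "{g r, g s} \<in> E \<longleftrightarrow> {r, s} \<in> E'" if "r \<in> S'" "s \<in> S'" for r s
    using f_edge gS fg that by metis
  have f_edge': "{f a, f b} \<in> E' \<longleftrightarrow> {a, b} \<in> E" if "a \<in> S" "b \<in> S" for a b
    using f_edge that by metis
  note fwd = relabel_in_N_carrier[OF graph' g_edge] relabel_relabel[OF graph _ fS gf]
  note bwd = relabel_in_N_carrier[OF graph f_edge'] relabel_relabel[OF graph' _ gS fg]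
  have "N_lie_iso S E S' E' (relabel S' g)"
    unfolding N_lie_iso_def
  proof (intro conjI ballI exI)
    show "bij_betw (relabel S' g) (N_carrier S E) (N_carrier S' E')"
      by (rule bij_betw_byWitness[where f' = "relabel S f"]) (use fwd bwd in auto)
    show "relabel S' g (N_mult E x y) = N_mult E' (relabel S' g x) (relabel S' g y)" for x y
      by (rule relabel_N_mult[OF graph' g_edge])
  qed (use fwd bwd in \<open>auto intro: smooth_if_linear linear_relabel\<close>)
  then show ?thesis by (auto simp: N_lie_isomorphic_def)
qed

theorem mainTheorem4:
  fixes S :: "'a::finite set" and E :: "'a set set"
    and S' :: "'b::finite set" and E' :: "'b set set"
  assumes "simple_graph S E" and "simple_graph S' E'"
  shows "N_lie_isomorphic S E S' E' \<longleftrightarrow> graph_iso S E S' E'"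
  using graph_iso_if_N_lie_isomorphic[OF assms] N_lie_isomorphic_if_graph_iso[OF assms] by blast

end
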